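(* For every positive integer $q$ and every real $X>0$, \[ |r_2^*(X;q)|\le \frac{2.18}{\sqrt X}\,j_1^*(q). \]
   Context: $\mu$ is the Möbius function and $\varphi$ Euler's totient. For a positive integer $q$ and real $X>0$, \[ r_2^*(X;q)=\sum_{\substack{k^2\ell r> X\\ r\mid q\\ (k\ell,q)=(k,\ell)=1}}\frac{\mu(rk\ell)\varphi(k)}{rk^3\ell^2}, \] the (absolutely convergent) sum running over triples $(k,\ell,r)$ of positive integers. Also $j_1^*(q)=\prod_{p\mid q}\frac{p^{3/2}+p}{p^{3/2}+1}$. *)

theory Defs
  imports "HOL-Analysis.Analysis" "HOL-Number_Theory.Number_Theory"
    "HOL-Computational_Algebra.Squarefree"
begin

definition moebius :: "nat \<Rightarrow> real" where
  "moebius n = (if n = 0 \<or> \<not> squarefree n then 0 else (-1) ^ card (prime_factors n))"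

definition r2_index :: "real \<Rightarrow> nat \<Rightarrow> (nat \<times> nat \<times> nat) set" where
  "r2_index X q = {(k, l, r). k > 0 \<and> l > 0 \<and> r > 0 \<and>
      real (k^2 * l * r) > X \<and> r dvd q \<and> coprime (k * l) q \<and> coprime k l}"

definition r2_star :: "real \<Rightarrow> nat \<Rightarrow> real" where
  "r2_star X q = (\<Sum>\<^sub>\<infinity>(k, l, r)\<in>r2_index X q.
      moebius (r * k * l) * real (totient k) / (real r * real k ^ 3 * real l ^ 2))"

definition j1_star :: "nat \<Rightarrow> real" where
  "j1_star q = (\<Prod>p\<in>prime_factors q.
      (real p powr (3/2) + real p) / (real p powr (3/2) + 1))"

end

(*
  Grouping the triples by (l, r) gives
    r_2^*(X;q) = sum_{l,r} mu(rl)/(r l^2) * sum_{k^2 lr > X, (k,lq) = 1} mu(k) phi(k)/k^3.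
  The inner sum is at most sqrt(lr/X) in absolute value: if lr > X it runs over all
  k coprime to lq and equals an Euler product prod_p (1 - (p-1)/p^3) in [0, 1];
  otherwise it is dominated by the tail sum_{k >= n} phi(k)/k^3 <= 1/n, n > sqrt(X/(lr)).
  Only squarefree l coprime to q and squarefree r dividing q contribute, so
    |r_2^*(X;q)| <= X^(-1/2) (sum_l l^(-3/2)) prod_{p|q} (1 + p^(-1/2)).
  Multiplying such l by the squarefree divisors of q is injective with squarefree
  values, so (sum_l l^(-3/2)) prod_{p|q} (1 + p^(-3/2)) <= zeta(3/2)/zeta(3) < 2.18,
  and the quotient of the two products over p | q is j_1^*(q).
*)
theory Submission
  imports Defs
begin

section \<open>Multiplicative functions on squarefree numbers\<close>

lemma abs_moebius_le: "\<bar>moebius n\<bar> \<le> 1"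
  by (simp add: moebius_def)

lemma abs_moebius: "\<bar>moebius n\<bar> = (if squarefree n then 1 else 0)"
  by (simp add: moebius_def)

lemma moebius_prime: "prime p \<Longrightarrow> moebius p = -1"
  by (simp add: moebius_def squarefree_prime prime_prime_factors)

lemma moebius_mult_coprime:
  assumes "coprime a b"
  shows "moebius (a * b) = moebius a * moebius b"
proof (cases "a = 0 \<or> b = 0")
  case False
  have "squarefree (a * b) \<longleftrightarrow> squarefree a \<and> squarefree b"
    using squarefree_mult_coprime[OF assms] squarefree_multD by blast
  moreover have "prime_factors a \<inter> prime_factors b = {}"
    using assms by (metis IntE coprime_common_divisor equals0I in_prime_factors_iff not_prime_unit)
  then have "card (prime_factors (a * b)) = card (prime_factors a) + card (prime_factors b)"
    using False by (simp add: prime_factors_product card_Un_disjoint)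
  ultimately show ?thesis
    using False by (simp add: moebius_def power_add)
qed (auto simp: moebius_def)

lemma multiplicative_prod_primes:
  fixes h :: "nat \<Rightarrow> 'a::comm_monoid_mult"
  assumes h1: "h 1 = 1" and hmult: "\<And>a b. coprime a b \<Longrightarrow> h (a * b) = h a * h b"
    and T: "finite T" "\<forall>p\<in>T. prime p"
  shows "h (\<Prod>T) = (\<Prod>p\<in>T. h p)"
  using T
proof (induction T rule: finite_induct)
  case (insert p T)
  have "coprime p (\<Prod>T)"
    using insert by (intro prod_coprime_right) (auto intro: primes_coprime)
  then show ?case using insert by (simp add: hmult)
qed (use h1 in simp)

lemma prod_prime_factors_squarefree:
  fixes d :: nat
  assumes "squarefree d"
  shows "\<Prod>(prime_factors d) = d"
proof -
  have "d \<noteq> 0" using assms by (metis not_squarefree_0)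
  then have "(\<Prod>p\<in>prime_factors d. p ^ multiplicity p d) = normalize d"
    by (rule prod_prime_factors)
  moreover have "multiplicity p d = 1" if "p \<in> prime_factors d" for p
    using assms that squarefree_factorial_semiring'[of d] \<open>d \<noteq> 0\<close> by auto
  ultimately show ?thesis by simp
qed

definition squarefree_over :: "nat set \<Rightarrow> nat set" where
  "squarefree_over S = {d. squarefree d \<and> prime_factors d \<subseteq> S}"

lemma squarefree_prod_primes:
  fixes T :: "nat set"
  assumes "finite T" "\<forall>p\<in>T. prime p"
  shows "squarefree (\<Prod>T)" "prime_factors (\<Prod>T) = T"
proof -
  show "squarefree (\<Prod>T)"
    using assms squarefree_prod_coprime[of T id] by (simp add: primes_coprime squarefree_prime)
  have "prime_factors (prod id T) = \<Union>((prime_factors \<circ> id) ` T)"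
    using assms by (intro prime_factors_prod) auto
  then have "prime_factors (\<Prod>T) = (\<Union>p\<in>T. prime_factors p)"
    by simp
  also have "\<dots> = T" using assms(2) by (simp add: prime_prime_factors)
  finally show "prime_factors (\<Prod>T) = T" .
qed

lemma bij_betw_prod_squarefree_over:
  assumes "finite S" "\<forall>p\<in>S. prime p"
  shows "bij_betw Prod (Pow S) (squarefree_over S)"
proof (rule bij_betw_byWitness[where f' = prime_factors])
  have T: "finite T" "\<forall>p\<in>T. prime p" if "T \<in> Pow S" for T
    using that assms finite_subset by auto
  show "\<forall>T\<in>Pow S. prime_factors (\<Prod>T) = T"
    using squarefree_prod_primes(2)[OF T] by blast
  show "Prod ` Pow S \<subseteq> squarefree_over S"
    using squarefree_prod_primes[OF T] by (auto simp: squarefree_over_def)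
  show "\<forall>d\<in>squarefree_over S. \<Prod>(prime_factors d) = d"
    by (simp add: squarefree_over_def prod_prime_factors_squarefree)
  show "prime_factors ` squarefree_over S \<subseteq> Pow S"
    by (auto simp: squarefree_over_def)
qed

lemma coprime_squarefree_over:
  assumes "d \<in> squarefree_over S" "\<And>p. p \<in> S \<Longrightarrow> coprime p n"
  shows "coprime d n"
proof -
  have "coprime (\<Prod>(prime_factors d)) n"
    using assms by (intro prod_coprime_left) (auto simp: squarefree_over_def)
  then show ?thesis
    using assms(1) by (simp add: squarefree_over_def prod_prime_factors_squarefree)
qed

lemma squarefree_over_pos: "d \<in> squarefree_over S \<Longrightarrow> d > 0"
  by (metis gr0I mem_Collect_eq not_squarefree_0 squarefree_over_def)

lemma finite_squarefree_over: "finite S \<Longrightarrow> \<forall>p\<in>S. prime p \<Longrightarrow> finite (squarefree_over S)"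
  using bij_betw_prod_squarefree_over bij_betw_finite by blast

lemma sum_squarefree_over_multiplicative:
  fixes h :: "nat \<Rightarrow> 'a::comm_semiring_1"
  assumes S: "finite S" "\<forall>p\<in>S. prime p"
    and h1: "h 1 = 1" and hmult: "\<And>a b. coprime a b \<Longrightarrow> h (a * b) = h a * h b"
  shows "(\<Sum>d\<in>squarefree_over S. h d) = (\<Prod>p\<in>S. 1 + h p)"
proof -
  have "(\<Sum>d\<in>squarefree_over S. h d) = (\<Sum>T\<in>Pow S. h (\<Prod>T))"
    using sum.reindex_bij_betw[OF bij_betw_prod_squarefree_over[OF S], of h] by simp
  also have "\<dots> = (\<Sum>T\<in>Pow S. \<Prod>p\<in>T. h p)"
    using S finite_subset
    by (intro sum.cong refl multiplicative_prod_primes[of h, OF h1 hmult]) auto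
  also have "\<dots> = (\<Prod>p\<in>S. h p + 1)"
    by (subst prod_add[OF S(1)]) simp
  finally show ?thesis
    by (simp add: add.commute)
qed

section \<open>Sums of \<open>\<mu>(k) \<phi>(k) / k\<^sup>3\<close> over \<open>k\<close> coprime to \<open>n\<close>\<close>

lemma nonneg_bounded_partial_sums_imp_infsum_le:
  fixes f :: "'a \<Rightarrow> real"
  assumes "\<And>x. x \<in> A \<Longrightarrow> 0 \<le> f x"
    and "\<And>F. finite F \<Longrightarrow> F \<subseteq> A \<Longrightarrow> sum f F \<le> B"
  shows "f summable_on A" "infsum f A \<le> B"
proof -
  show "f summable_on A"
    using assms by (intro nonneg_bounded_partial_sums_imp_summable_on[where C = B]) auto
  then show "infsum f A \<le> B"
    using assms(2) by (rule infsum_le_finite_sums)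
qed

lemma totient_div_cube_le:
  fixes k :: nat
  assumes "k \<ge> 2"
  shows "real (totient k) / real k ^ 3 \<le> 1 / real k - 1 / real (Suc k)"
proof -
  have k: "real k \<ge> 2" using assms by simp
  have "real (totient k) \<le> real k - 1"
    using totient_less[of k] assms by linarith
  then have "real (totient k) / real k ^ 3 \<le> (real k - 1) / real k ^ 3"
    by (intro divide_right_mono) auto
  also have "\<dots> \<le> 1 / (real k * (real k + 1))"
  proof -
    have "(real k - 1) * (real k * (real k + 1)) \<le> real k ^ 3"
      by (simp add: power3_eq_cube algebra_simps)
    moreover have "real k ^ 3 > 0" "real k * (real k + 1) > 0"
      using k by simp_all
    ultimately show ?thesis by (simp add: divide_simps)
  qed
  also have "\<dots> = 1 / real k - 1 / real (Suc k)"
    using k by (simp add: field_simps)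
  finally show ?thesis .
qed

lemma totient_div_cube_tail:
  fixes n :: nat
  assumes "n \<ge> 2" "K \<subseteq> {n..}"
  shows "(\<lambda>k. real (totient k) / real k ^ 3) summable_on K"
    "(\<Sum>\<^sub>\<infinity>k\<in>K. real (totient k) / real k ^ 3) \<le> 1 / real n"
proof -
  have "sum (\<lambda>k. real (totient k) / real k ^ 3) F \<le> 1 / real n"
    if F: "finite F" "F \<subseteq> K" for F
  proof -
    define M where "M = Max (insert n F)"
    have FM: "F \<subseteq> {n..M}" and nM: "n \<le> M"
      using F assms(2) by (auto simp: M_def)
    have "sum (\<lambda>k. real (totient k) / real k ^ 3) F \<le> (\<Sum>k\<in>F. 1 / real k - 1 / real (Suc k))"
      using FM assms(1) by (intro sum_mono totient_div_cube_le) auto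
    also have "\<dots> \<le> (\<Sum>k=n..M. 1 / real k - 1 / real (Suc k))"
      using FM assms(1) by (intro sum_mono2) (auto intro!: divide_left_mono)
    also have "\<dots> = 1 / real n - 1 / real (Suc M)"
      using sum_Suc_diff[of n M "\<lambda>k. - (1 / real k)"] nM by simp
    also have "\<dots> \<le> 1 / real n"
      by simp
    finally show ?thesis .
  qed
  then show "(\<lambda>k. real (totient k) / real k ^ 3) summable_on K"
    "(\<Sum>\<^sub>\<infinity>k\<in>K. real (totient k) / real k ^ 3) \<le> 1 / real n"
    using nonneg_bounded_partial_sums_imp_infsum_le[of K _ "1 / real n"] by auto
qed

definition moebius_totient_cube :: "nat \<Rightarrow> real" where
  "moebius_totient_cube k = moebius k * real (totient k) / real k ^ 3"

lemma moebius_totient_cube_Suc_0 [simp]: "moebius_totient_cube (Suc 0) = 1"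
  by (simp add: moebius_totient_cube_def moebius_def)

lemma moebius_totient_cube_mult_coprime:
  "coprime a b \<Longrightarrow> moebius_totient_cube (a * b) = moebius_totient_cube a * moebius_totient_cube b"
  by (simp add: moebius_totient_cube_def moebius_mult_coprime totient_mult_coprime power_mult_distrib)

lemma moebius_totient_cube_prime:
  "prime p \<Longrightarrow> moebius_totient_cube p = (1 - real p) / real p ^ 3"
  using prime_gt_0_nat[of p]
  by (simp add: moebius_totient_cube_def moebius_prime totient_prime Suc_le_eq)

lemma abs_moebius_totient_cube_le: "\<bar>moebius_totient_cube k\<bar> \<le> real (totient k) / real k ^ 3"
proof -
  have "\<bar>moebius_totient_cube k\<bar> = \<bar>moebius k\<bar> * (real (totient k) / real k ^ 3)"
    by (simp add: moebius_totient_cube_def abs_mult)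
  also have "\<dots> \<le> real (totient k) / real k ^ 3"
    using abs_moebius_le by (intro mult_left_le_one_le) auto
  finally show ?thesis .
qed

lemma moebius_totient_cube_tail_atLeast:
  fixes n :: nat
  assumes "n \<ge> 2" "K \<subseteq> {n..}"
  shows "(\<lambda>k. norm (moebius_totient_cube k)) summable_on K"
    "(\<Sum>\<^sub>\<infinity>k\<in>K. norm (moebius_totient_cube k)) \<le> 1 / real n"
    "\<bar>\<Sum>\<^sub>\<infinity>k\<in>K. moebius_totient_cube k\<bar> \<le> 1 / real n"
proof -
  note tail = totient_div_cube_tail[OF assms]
  show norm_summable: "(\<lambda>k. norm (moebius_totient_cube k)) summable_on K"
    by (rule summable_on_comparison_test[OF tail(1)]) (simp_all add: abs_moebius_totient_cube_le)
  have "(\<Sum>\<^sub>\<infinity>k\<in>K. norm (moebius_totient_cube k))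
      \<le> (\<Sum>\<^sub>\<infinity>k\<in>K. real (totient k) / real k ^ 3)"
    using norm_summable tail(1) abs_moebius_totient_cube_le by (intro infsum_mono) auto
  with tail(2) show "(\<Sum>\<^sub>\<infinity>k\<in>K. norm (moebius_totient_cube k)) \<le> 1 / real n"
    by linarith
  then show "\<bar>\<Sum>\<^sub>\<infinity>k\<in>K. moebius_totient_cube k\<bar> \<le> 1 / real n"
    using norm_infsum_bound[OF norm_summable] by simp
qed

lemma moebius_totient_cube_abs_summable:
  "(\<lambda>k. norm (moebius_totient_cube k)) summable_on {k. 0 < k}"
  "(\<Sum>\<^sub>\<infinity>k\<in>{k. 0 < k}. norm (moebius_totient_cube k)) \<le> 3 / 2"
proof -
  have split: "{k::nat. 0 < k} = {1} \<union> {2..}" by auto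
  note tail = moebius_totient_cube_tail_atLeast[of 2 "{2..}", simplified]
  show "(\<lambda>k. norm (moebius_totient_cube k)) summable_on {k. 0 < k}"
    unfolding split using tail(1) by (intro summable_on_union) auto
  have "(\<Sum>\<^sub>\<infinity>k\<in>{k. 0 < k}. norm (moebius_totient_cube k))
      = norm (moebius_totient_cube 1) + (\<Sum>\<^sub>\<infinity>k\<in>{2..}. norm (moebius_totient_cube k))"
    unfolding split using tail(1) by (subst infsum_Un_disjoint) auto
  then show "(\<Sum>\<^sub>\<infinity>k\<in>{k. 0 < k}. norm (moebius_totient_cube k)) \<le> 3 / 2"
    using tail(2) by simp
qed

lemma sum_moebius_totient_cube_squarefree_over:
  assumes "finite S" "\<forall>p\<in>S. prime p"
  shows "0 \<le> (\<Sum>d\<in>squarefree_over S. moebius_totient_cube d)"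
    "(\<Sum>d\<in>squarefree_over S. moebius_totient_cube d) \<le> 1"
proof -
  have eq: "(\<Sum>d\<in>squarefree_over S. moebius_totient_cube d) = (\<Prod>p\<in>S. 1 + (1 - real p) / real p ^ 3)"
  proof -
    have "(\<Sum>d\<in>squarefree_over S. moebius_totient_cube d) = (\<Prod>p\<in>S. 1 + moebius_totient_cube p)"
      by (rule sum_squarefree_over_multiplicative[OF assms]) (simp_all add: moebius_totient_cube_mult_coprime)
    also have "\<dots> = (\<Prod>p\<in>S. 1 + (1 - real p) / real p ^ 3)"
      using assms(2) by (intro prod.cong) (simp_all add: moebius_totient_cube_prime)
    finally show ?thesis .
  qed
  have factor: "0 \<le> 1 + (1 - real p) / real p ^ 3 \<and> 1 + (1 - real p) / real p ^ 3 \<le> 1" if "p \<in> S" for p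
  proof -
    have p: "real p \<ge> 2" using assms(2) that prime_ge_2_nat by force
    then have "real p - 1 \<le> real p ^ 3"
      using self_le_power[of "real p" 3] by linarith
    then show ?thesis using p by (simp add: divide_simps)
  qed
  show "0 \<le> (\<Sum>d\<in>squarefree_over S. moebius_totient_cube d)"
    unfolding eq using factor by (intro prod_nonneg) auto
  show "(\<Sum>d\<in>squarefree_over S. moebius_totient_cube d) \<le> 1"
    unfolding eq using factor by (intro prod_le_1) auto
qed

text \<open>The part of the sum over numbers built from the primes below \<open>N\<close> is the
  Euler product \<open>\<Prod>(1 - (p - 1) / p\<^sup>3) \<in> [0, 1]\<close>; the rest lives on \<open>k \<ge> N\<close>.\<close>

lemma abs_infsum_moebius_totient_cube_coprime_approx:
  fixes n N :: nat
  assumes "N \<ge> 2"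
  defines "K \<equiv> {k. 0 < k \<and> coprime k n}"
  shows "\<bar>infsum moebius_totient_cube K\<bar> \<le> 1 + 1 / real N"
proof -
  have "(\<lambda>k. norm (moebius_totient_cube k)) summable_on K"
    by (rule summable_on_subset[OF moebius_totient_cube_abs_summable(1)]) (auto simp: K_def)
  then have summable: "moebius_totient_cube summable_on K"
    by (rule abs_summable_summable)
  define S where "S = {p. prime p \<and> p < N \<and> coprime p n}"
  define A where "A = squarefree_over S"
  have S: "finite S" "\<forall>p\<in>S. prime p" by (auto simp: S_def)
  have AK: "A \<subseteq> K"
  proof
    fix d assume d: "d \<in> A"
    then have "coprime d n"
      unfolding A_def by (rule coprime_squarefree_over) (simp add: S_def)
    with d show "d \<in> K" by (simp add: K_def A_def squarefree_over_pos)
  qed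
  have vanish: "moebius_totient_cube k = 0" if k: "k \<in> K - A" "k < N" for k
  proof (cases "squarefree k")
    case True
    then obtain p where p: "p \<in> prime_factors k" "p \<notin> S"
      using k by (auto simp: A_def squarefree_over_def)
    have "prime p" "p dvd k" "p \<le> k"
      using p(1) k(1) by (auto simp: in_prime_factors_iff K_def dvd_imp_le)
    moreover have "coprime p n"
      using coprime_divisors[OF \<open>p dvd k\<close> dvd_refl] k(1) by (simp add: K_def)
    ultimately have "p \<in> S" using k(2) by (simp add: S_def)
    with p(2) show ?thesis by blast
  qed (simp add: moebius_totient_cube_def moebius_def)
  have finA: "finite A" unfolding A_def by (rule finite_squarefree_over[OF S])
  have "infsum moebius_totient_cube K = infsum moebius_totient_cube (A \<union> (K - A))"
    using AK by (simp add: Un_absorb1)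
  also have "\<dots> = infsum moebius_totient_cube A + infsum moebius_totient_cube (K - A)"
    using finA summable_on_subset[OF summable, of "K - A"] by (intro infsum_Un_disjoint) auto
  finally have "infsum moebius_totient_cube K = sum moebius_totient_cube A + infsum moebius_totient_cube (K - A)"
    using finA by simp
  moreover have "infsum moebius_totient_cube (K - A) = infsum moebius_totient_cube ((K - A) \<inter> {N..})"
    using vanish by (intro infsum_cong_neutral) auto
  moreover have "\<bar>infsum moebius_totient_cube ((K - A) \<inter> {N..})\<bar> \<le> 1 / real N"
    using assms by (intro moebius_totient_cube_tail_atLeast(3)) auto
  moreover have "\<bar>sum moebius_totient_cube A\<bar> \<le> 1"
    using sum_moebius_totient_cube_squarefree_over[OF S] by (simp add: A_def)
  ultimately show ?thesis by linarith
qed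

lemma abs_infsum_moebius_totient_cube_coprime_le:
  fixes n :: nat
  shows "\<bar>\<Sum>\<^sub>\<infinity>k\<in>{k. 0 < k \<and> coprime k n}. moebius_totient_cube k\<bar> \<le> 1"
proof (rule field_le_epsilon)
  fix e :: real
  assume "0 < e"
  then obtain N where N: "inverse (real (Suc N)) < e"
    using reals_Archimedean by blast
  have "1 / real (Suc (Suc N)) \<le> inverse (real (Suc N))"
    by (simp add: inverse_eq_divide frac_le)
  then show "\<bar>\<Sum>\<^sub>\<infinity>k\<in>{k. 0 < k \<and> coprime k n}. moebius_totient_cube k\<bar> \<le> 1 + e"
    using abs_infsum_moebius_totient_cube_coprime_approx[of "Suc (Suc N)" n] N by simp
qed

lemma moebius_totient_cube_tail_greater:
  fixes s :: real
  assumes "1 \<le> s" "K \<subseteq> {k. s < real k}"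
  shows "(\<lambda>k. norm (moebius_totient_cube k)) summable_on K"
    "(\<Sum>\<^sub>\<infinity>k\<in>K. norm (moebius_totient_cube k)) \<le> 1 / s"
    "\<bar>\<Sum>\<^sub>\<infinity>k\<in>K. moebius_totient_cube k\<bar> \<le> 1 / s"
proof -
  define n where "n = nat \<lfloor>s\<rfloor> + 1"
  have n: "n \<ge> 2" "s < real n"
    using assms(1) unfolding n_def by linarith+
  have "K \<subseteq> {n..}"
  proof
    fix k assume "k \<in> K"
    with assms(2) have "s < real k" by auto
    then have "n \<le> k" using assms(1) unfolding n_def by linarith
    then show "k \<in> {n..}" by simp
  qed
  moreover have "1 / real n \<le> 1 / s"
    using assms(1) n by (intro divide_left_mono) auto
  ultimately show "(\<lambda>k. norm (moebius_totient_cube k)) summable_on K"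
    "(\<Sum>\<^sub>\<infinity>k\<in>K. norm (moebius_totient_cube k)) \<le> 1 / s"
    "\<bar>\<Sum>\<^sub>\<infinity>k\<in>K. moebius_totient_cube k\<bar> \<le> 1 / s"
    using moebius_totient_cube_tail_atLeast[of n K] n by auto
qed

definition large_coprimes :: "real \<Rightarrow> nat \<Rightarrow> nat \<Rightarrow> nat set" where
  "large_coprimes X m n = {k. 0 < k \<and> X < real (k^2 * m) \<and> coprime k n}"

lemma moebius_totient_cube_large_coprimes:
  fixes X :: real and m n :: nat
  assumes "X > 0" "m > 0"
  defines "K \<equiv> large_coprimes X m n"
  shows "(\<lambda>k. norm (moebius_totient_cube k)) summable_on K"
    "(\<Sum>\<^sub>\<infinity>k\<in>K. norm (moebius_totient_cube k)) \<le> 3 / 2 * sqrt (real m / X)"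
    "\<bar>\<Sum>\<^sub>\<infinity>k\<in>K. moebius_totient_cube k\<bar> \<le> sqrt (real m / X)"
proof -
  define s where "s = sqrt (X / real m)"
  have s: "s > 0" "1 / s = sqrt (real m / X)"
    using assms by (simp_all add: s_def real_sqrt_divide)
  have Ks: "K \<subseteq> {k. s < real k}"
  proof
    fix k assume "k \<in> K"
    then have "X / real m < real k ^ 2"
      using assms(2) by (simp add: K_def large_coprimes_def field_simps)
    then show "k \<in> {k. s < real k}"
      by (simp add: s_def real_less_lsqrt)
  qed
  have "(\<lambda>k. norm (moebius_totient_cube k)) summable_on K \<and>
    (\<Sum>\<^sub>\<infinity>k\<in>K. norm (moebius_totient_cube k)) \<le> 3 / 2 * sqrt (real m / X) \<and>
    \<bar>\<Sum>\<^sub>\<infinity>k\<in>K. moebius_totient_cube k\<bar> \<le> sqrt (real m / X)"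
  proof (cases "1 \<le> s")
    case True
    then show ?thesis
      using moebius_totient_cube_tail_greater[OF True Ks] s by auto
  next
    case False
    then have "1 < 1 / s" using s(1) by (simp add: less_divide_eq)
    then have root: "1 < sqrt (real m / X)" using s(2) by simp
    have "X < real m"
      using False assms(2) by (simp add: s_def)
    then have K: "K = {k. 0 < k \<and> coprime k n}"
      unfolding K_def large_coprimes_def by (auto intro: order.strict_trans2 simp del: of_nat_mult)
    have summable: "(\<lambda>k. norm (moebius_totient_cube k)) summable_on K"
      by (rule summable_on_subset[OF moebius_totient_cube_abs_summable(1)]) (auto simp: K)
    have "(\<Sum>\<^sub>\<infinity>k\<in>K. norm (moebius_totient_cube k))
        \<le> (\<Sum>\<^sub>\<infinity>k\<in>{k. 0 < k}. norm (moebius_totient_cube k))"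
      using summable moebius_totient_cube_abs_summable(1) by (intro infsum_mono2) (auto simp: K)
    also have "\<dots> \<le> 3 / 2 * sqrt (real m / X)"
      using moebius_totient_cube_abs_summable(2) root by linarith
    finally have "(\<Sum>\<^sub>\<infinity>k\<in>K. norm (moebius_totient_cube k)) \<le> 3 / 2 * sqrt (real m / X)" .
    moreover have "\<bar>\<Sum>\<^sub>\<infinity>k\<in>K. moebius_totient_cube k\<bar> \<le> sqrt (real m / X)"
      using abs_infsum_moebius_totient_cube_coprime_le[of n] root unfolding K by linarith
    ultimately show ?thesis
      using summable by blast
  qed
  then show "(\<lambda>k. norm (moebius_totient_cube k)) summable_on K"
    "(\<Sum>\<^sub>\<infinity>k\<in>K. norm (moebius_totient_cube k)) \<le> 3 / 2 * sqrt (real m / X)"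
    "\<bar>\<Sum>\<^sub>\<infinity>k\<in>K. moebius_totient_cube k\<bar> \<le> sqrt (real m / X)"
    by auto
qed

section \<open>Sums of \<open>1 / (n \<surd>n)\<close> over squarefree numbers\<close>

lemma inverse_three_halves_le_diff:
  fixes x :: real
  assumes "x \<ge> 1"
  shows "1 / (x * sqrt x) \<le> 2 / sqrt (x - 1/2) - 2 / sqrt (x + 1/2)"
proof -
  define a b where "a = sqrt (x - 1/2)" and "b = sqrt (x + 1/2)"
  have pos: "a > 0" "b > 0" "sqrt x > 0" using assms by (simp_all add: a_def b_def)
  have sq: "a^2 = x - 1/2" "b^2 = x + 1/2" using assms by (simp_all add: a_def b_def)
  have "(a * b)^2 \<le> x^2"
    unfolding power_mult_distrib sq by (simp add: algebra_simps power2_eq_square)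
  then have ab: "a * b \<le> x"
    by (rule power2_le_imp_le) (use assms in simp)
  have "(a + b)^2 \<le> (2 * sqrt x)^2"
    using ab assms by (simp add: power2_sum sq power_mult_distrib)
  then have apb: "a + b \<le> 2 * sqrt x"
    by (rule power2_le_imp_le) (use assms in simp)
  have "(b - a) * (a + b) = b^2 - a^2"
    by (simp add: algebra_simps power2_eq_square)
  then have diff: "b - a = 1 / (a + b)"
    using pos by (simp add: sq eq_divide_eq)
  have "2 / a - 2 / b = 2 * (b - a) / (a * b)"
    using pos by (simp add: field_simps)
  also have "\<dots> = 2 / (a * b * (a + b))"
    unfolding diff by simp
  also have "\<dots> \<ge> 2 / (x * (2 * sqrt x))"
    using pos ab apb by (intro divide_left_mono mult_mono) auto
  finally show ?thesis
    using pos by (simp add: a_def b_def)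
qed

lemma inverse_mult_sqrt_le:
  fixes c :: real
  assumes "0 < c" "c^2 \<le> x"
  shows "1 / (x * sqrt x) \<le> 1 / (x * c)"
proof -
  have "0 < x"
    using assms zero_less_power[OF assms(1), of 2] by linarith
  then show ?thesis
    using assms real_le_rsqrt[OF assms(2)]
    by (intro divide_left_mono mult_left_mono mult_pos_pos) auto
qed

lemma sum_inverse_three_halves_tail_le:
  assumes "n \<ge> 1"
  shows "(\<Sum>m=n..M. 1 / (real m * sqrt (real m))) \<le> 2 / sqrt (real n - 1/2)"
proof (cases "n \<le> M")
  case True
  define g where "g m = 2 / sqrt (real m - 1/2)" for m :: nat
  have "(\<Sum>m=n..M. 1 / (real m * sqrt (real m))) \<le> (\<Sum>m=n..M. g m - g (Suc m))"
  proof (rule sum_mono)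
    fix m assume "m \<in> {n..M}"
    then have "1 / (real m * sqrt (real m)) \<le> 2 / sqrt (real m - 1/2) - 2 / sqrt (real m + 1/2)"
      using assms by (intro inverse_three_halves_le_diff) simp
    moreover have "g (Suc m) = 2 / sqrt (real m + 1/2)"
      by (simp add: g_def add.commute)
    ultimately show "1 / (real m * sqrt (real m)) \<le> g m - g (Suc m)"
      by (simp only: g_def)
  qed
  also have "\<dots> = g n - g (Suc M)"
    using sum_Suc_diff[of n M "\<lambda>m. - g m"] True by simp
  also have "\<dots> \<le> g n"
    by (simp add: g_def)
  finally show ?thesis by (simp add: g_def)
qed simp

lemma sum_inverse_three_halves_le:
  assumes "finite B" "B \<subseteq> {1..}"
  shows "(\<Sum>m\<in>B. 1 / (real m * sqrt (real m))) \<le> 2.6139"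
proof -
  define f where "f m = 1 / (real m * sqrt (real m))" for m :: nat
  define M where "M = max 4 (Max (insert 0 B))"
  have "B \<subseteq> {1..M}"
  proof
    fix m assume "m \<in> B"
    then have "1 \<le> m" "m \<le> Max (insert 0 B)"
      using assms by auto
    then show "m \<in> {1..M}" by (simp add: M_def)
  qed
  then have "sum f B \<le> sum f {1..M}"
    by (intro sum_mono2) (auto simp: f_def)
  also have "{1..M} = {1..4} \<union> {5..M}"
    by (auto simp: M_def)
  also have "sum f \<dots> = sum f {1..4} + sum f {5..M}"
    by (rule sum.union_disjoint) auto
  also have "sum f {1..4} \<le> 1 + 1 / (2 * 1.41421) + 1 / (3 * 1.73205) + 1 / (4 * 2)"
  proof -
    have "{1..4::nat} = {1, 2, 3, 4}" by (simp add: set_eq_iff) presburger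
    moreover have "f 2 \<le> 1 / (2 * 1.41421)"
      using inverse_mult_sqrt_le[of "1.41421" 2] by (simp add: f_def power2_eq_square)
    moreover have "f 3 \<le> 1 / (3 * 1.73205)"
      using inverse_mult_sqrt_le[of "1.73205" 3] by (simp add: f_def power2_eq_square)
    moreover have "f 4 \<le> 1 / (4 * 2)"
      using inverse_mult_sqrt_le[of 2 4] by (simp add: f_def power2_eq_square)
    ultimately show ?thesis by (simp add: f_def)
  qed
  also have "sum f {5..M} \<le> 2 / sqrt (9 / 2)"
    using sum_inverse_three_halves_tail_le[of 5 M] by (simp add: f_def)
  also have "2 / sqrt (9 / 2) \<le> 2 / (2.12132 :: real)"
    by (intro divide_left_mono real_le_rsqrt) (simp_all add: power2_eq_square)
  finally show ?thesis
    by (simp add: f_def)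
qed

lemma squarefree_mult_square_inj:
  fixes n n' d d' :: nat
  assumes sq: "squarefree n" "squarefree n'" and pos: "d > 0" "d' > 0"
    and eq: "n * d^2 = n' * d'^2"
  shows "n = n' \<and> d = d'"
proof -
  define g where "g = gcd d d'"
  have g: "g > 0" using pos by (simp add: g_def)
  obtain a b where ab: "d = a * g" "d' = b * g" "coprime a b"
    using gcd_coprime_exists[of d d'] g unfolding g_def by auto
  have "(n * a^2) * g^2 = (n' * b^2) * g^2"
    using eq unfolding ab by (simp add: power_mult_distrib mult.assoc)
  then have eq': "n * a^2 = n' * b^2" using g by simp
  have cop: "coprime (a^2) (b^2)" using ab(3) by simp
  have "a^2 dvd n'"
    using eq' coprime_dvd_mult_left_iff[OF cop] by (metis dvd_triv_right)
  then have a: "a = 1" using squarefreeD[OF sq(2)] by simp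
  have "b^2 dvd n"
    using eq' coprime_dvd_mult_left_iff[OF cop[THEN coprime_commute[THEN iffD1]]] by (metis dvd_triv_right)
  then have b: "b = 1" using squarefreeD[OF sq(1)] by simp
  show ?thesis using ab eq' a b by simp
qed

lemma sum_inverse_cube_ge: "(\<Sum>d=1..15::nat. 1 / real d ^ 3) \<ge> 1.1999"
proof -
  have "{1..15::nat} = {1,2,3,4,5,6,7,8,9,10,11,12,13,14,15}"
    by (simp add: set_eq_iff) presburger
  then show ?thesis by simp
qed

text \<open>\<open>(n, d) \<mapsto> n d\<^sup>2\<close> is injective on squarefree \<open>n\<close>, so the product is a
  subsum of \<open>\<Sum>\<^sub>m 1 / (m \<surd>m) \<le> 2.6139\<close>.\<close>

lemma sum_squarefree_times_sum_inverse_cube_le: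
  assumes "finite E" "\<forall>n\<in>E. squarefree n" "finite D" "D \<subseteq> {1..}"
  shows "(\<Sum>n\<in>E. 1 / (real n * sqrt (real n))) * (\<Sum>d\<in>D. 1 / real d ^ 3) \<le> 2.6139"
proof -
  define f where "f m = 1 / (real m * sqrt (real m))" for m :: nat
  define sq where "sq = (\<lambda>(n, d). n * d^2 :: nat)"
  have inj: "inj_on sq (E \<times> D)"
  proof (rule inj_onI)
    fix x y assume x: "x \<in> E \<times> D" and y: "y \<in> E \<times> D" and "sq x = sq y"
    obtain n d n' d' where "x = (n, d)" "y = (n', d')" by fastforce
    with x y \<open>sq x = sq y\<close> assms(2,4) have "n = n' \<and> d = d'"
      by (intro squarefree_mult_square_inj) (auto simp: sq_def Suc_le_eq)
    with \<open>x = (n, d)\<close> \<open>y = (n', d')\<close> show "x = y" by simp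
  qed
  have f_mult: "f (n * d^2) = f n * (1 / real d ^ 3)" for n d
  proof -
    have "sqrt (real (n * d^2)) = sqrt (real n) * real d"
      by (simp add: real_sqrt_mult)
    then show ?thesis by (simp add: f_def power3_eq_cube power2_eq_square)
  qed
  have "sum f E * (\<Sum>d\<in>D. 1 / real d ^ 3) = (\<Sum>(n, d)\<in>E \<times> D. f n * (1 / real d ^ 3))"
    by (simp add: sum_product sum.cartesian_product)
  also have "\<dots> = (\<Sum>x\<in>E \<times> D. f (sq x))"
    by (rule sum.cong) (auto simp: sq_def f_mult)
  also have "\<dots> = sum f (sq ` (E \<times> D))"
    by (simp add: sum.reindex[OF inj])
  also have "\<dots> \<le> 2.6139"
    unfolding f_def
  proof (rule sum_inverse_three_halves_le)
    have "n > 0" if "n \<in> E" for n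
      using assms(2) that by (metis gr0I not_squarefree_0)
    then show "sq ` (E \<times> D) \<subseteq> {1..}"
      using assms(4) by (auto simp: sq_def Suc_le_eq)
  qed (use assms(1,3) in simp)
  finally show ?thesis by (simp add: f_def)
qed

text \<open>The constant 2.18 of the theorem is \<open>\<zeta>(3/2) / \<zeta>(3)\<close>, rounded up.\<close>

lemma sum_squarefree_inverse_three_halves_le:
  assumes "finite E" "\<forall>n\<in>E. squarefree n"
  shows "(\<Sum>n\<in>E. 1 / (real n * sqrt (real n))) \<le> 2.18"
proof -
  define s where "s = (\<Sum>n\<in>E. 1 / (real n * sqrt (real n)))"
  have "s * 1.1999 \<le> s * (\<Sum>d=1..15::nat. 1 / real d ^ 3)"
    using sum_inverse_cube_ge by (intro mult_left_mono) (auto simp: s_def intro: sum_nonneg)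
  also have "\<dots> \<le> 2.6139"
    unfolding s_def using assms by (intro sum_squarefree_times_sum_inverse_cube_le) auto
  finally have "s \<le> 2.6139 / 1.1999"
    by (simp add: field_simps)
  also have "\<dots> \<le> 2.18"
    by simp
  finally show ?thesis by (simp add: s_def)
qed

lemma sum_squarefree_divisors_inverse_sqrt:
  "(\<Sum>d\<in>squarefree_over (prime_factors q). 1 / sqrt (real d))
     = (\<Prod>p\<in>prime_factors q. 1 + 1 / sqrt (real p))"
  by (rule sum_squarefree_over_multiplicative) (auto simp: real_sqrt_mult)

lemma sum_squarefree_divisors_inverse_three_halves:
  "(\<Sum>d\<in>squarefree_over (prime_factors q). 1 / (real d * sqrt (real d)))
     = (\<Prod>p\<in>prime_factors q. 1 + 1 / (real p * sqrt (real p)))"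
  by (rule sum_squarefree_over_multiplicative) (auto simp: real_sqrt_mult)

lemma j1_star_eq:
  "j1_star q = (\<Prod>p\<in>prime_factors q. 1 + 1 / sqrt (real p))
      / (\<Prod>p\<in>prime_factors q. 1 + 1 / (real p * sqrt (real p)))"
proof -
  have "(real p powr (3/2) + real p) / (real p powr (3/2) + 1)
      = (1 + 1 / sqrt (real p)) / (1 + 1 / (real p * sqrt (real p)))"
    if "p \<in> prime_factors q" for p
  proof -
    have p: "real p > 0" using that by (simp add: in_prime_factors_iff prime_gt_0_nat)
    have "real p powr (3/2) = real p * sqrt (real p)"
      using p by (simp add: powr_add[of _ 1 "1/2", simplified] powr_half_sqrt)
    moreover have "(1 + 1 / sqrt (real p)) * (real p * sqrt (real p)) = real p * sqrt (real p) + real p"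
      "(1 + 1 / (real p * sqrt (real p))) * (real p * sqrt (real p)) = real p * sqrt (real p) + 1"
      using p by (simp_all add: field_simps)
    ultimately show ?thesis
      using p by (metis mult_divide_mult_cancel_right mult_pos_pos real_sqrt_gt_0_iff less_irrefl)
  qed
  then show ?thesis
    unfolding j1_star_def by (simp add: prod_dividef[symmetric])
qed

lemma coprime_squarefree_divisor:
  assumes "d \<in> squarefree_over (prime_factors q)" "coprime l q"
  shows "coprime d l"
proof (rule coprime_squarefree_over[OF assms(1)])
  fix p assume "p \<in> prime_factors q"
  then have "p dvd q" by (rule in_prime_factors_imp_dvd)
  then show "coprime p l"
    using assms(2) coprime_divisors[OF _ dvd_refl, of p q l] by (simp add: coprime_commute)
qed

lemma sum_coprime_squarefree_inverse_three_halves_le: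
  assumes "finite L" "\<forall>l\<in>L. squarefree l \<and> coprime l q"
  shows "(\<Sum>l\<in>L. 1 / (real l * sqrt (real l))) * (\<Prod>p\<in>prime_factors q. 1 + 1 / (real p * sqrt (real p)))
    \<le> 2.18"
proof -
  define f where "f m = 1 / (real m * sqrt (real m))" for m :: nat
  define D where "D = squarefree_over (prime_factors q)"
  define mult where "mult = (\<lambda>(l, d). l * d :: nat)"
  have finD: "finite D" unfolding D_def by (rule finite_squarefree_over) auto
  have cop: "coprime d l" if "d \<in> D" "l \<in> L" for d l
    using coprime_squarefree_divisor that assms(2) by (simp add: D_def)
  have inj: "inj_on mult (L \<times> D)"
  proof (rule inj_onI)
    fix x y assume x: "x \<in> L \<times> D" and y: "y \<in> L \<times> D" and "mult x = mult y"
    obtain l d l' d' where xy: "x = (l, d)" "y = (l', d')" by fastforce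
    with x y have "d \<in> D" "d' \<in> D" "l \<in> L" "l' \<in> L" by auto
    have eq: "l * d = l' * d'" using \<open>mult x = mult y\<close> xy by (simp add: mult_def)
    have "d dvd d'"
      using eq cop[OF \<open>d \<in> D\<close> \<open>l' \<in> L\<close>] by (metis coprime_dvd_mult_right_iff dvd_triv_right)
    moreover have "d' dvd d"
      using eq cop[OF \<open>d' \<in> D\<close> \<open>l \<in> L\<close>] by (metis coprime_dvd_mult_right_iff dvd_triv_right)
    ultimately have "d = d'" by (rule dvd_antisym)
    moreover have "d > 0" using \<open>d \<in> D\<close> by (simp add: D_def squarefree_over_pos)
    ultimately show "x = y" using eq xy by simp
  qed
  have "sum f L * sum f D = (\<Sum>(l, d)\<in>L \<times> D. f l * f d)"
    by (simp add: sum_product sum.cartesian_product)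
  also have "\<dots> = (\<Sum>x\<in>L \<times> D. f (mult x))"
    by (rule sum.cong) (auto simp: mult_def f_def real_sqrt_mult)
  also have "\<dots> = sum f (mult ` (L \<times> D))"
    by (simp add: sum.reindex[OF inj])
  also have "\<dots> \<le> 2.18"
    unfolding f_def
  proof (rule sum_squarefree_inverse_three_halves_le)
    show "finite (mult ` (L \<times> D))" using assms(1) finD by simp
    show "\<forall>n\<in>mult ` (L \<times> D). squarefree n"
    proof
      fix n assume "n \<in> mult ` (L \<times> D)"
      then obtain l d where ld: "l \<in> L" "d \<in> D" "n = l * d" by (auto simp: mult_def)
      then have "squarefree l" "squarefree d" "coprime l d"
        using assms(2) cop[OF ld(2,1)] by (auto simp: D_def squarefree_over_def coprime_commute)
      then show "squarefree n" by (simp add: ld(3) squarefree_mult_coprime)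
    qed
  qed
  finally show ?thesis
    by (simp add: f_def D_def sum_squarefree_divisors_inverse_three_halves)
qed

section \<open>The majorant and the interchange of summation\<close>

definition r2_outer_index :: "nat \<Rightarrow> (nat \<times> nat) set" where
  "r2_outer_index q = {(l, r). 0 < l \<and> 0 < r \<and> r dvd q \<and> coprime l q}"

definition r2_majorant :: "real \<Rightarrow> nat \<times> nat \<Rightarrow> real" where
  "r2_majorant X = (\<lambda>(l, r). \<bar>moebius (r * l)\<bar> / (real r * real l ^ 2) * sqrt (real (l * r) / X))"

lemma r2_majorant_nonneg: "X > 0 \<Longrightarrow> r2_majorant X p \<ge> 0"
  by (simp add: r2_majorant_def abs_moebius split: prod.splits)

lemma r2_majorant_squarefree:
  assumes "X > 0" "squarefree (r * l)"
  shows "r2_majorant X (l, r) = 1 / sqrt X * (1 / (real l * sqrt (real l)) * (1 / sqrt (real r)))"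
proof -
  have pos: "l > 0" "r > 0"
    using assms(2) by (metis mult_is_0 not_squarefree_0 gr0I)+
  have "sqrt (real (l * r) / X) = sqrt (real l) * sqrt (real r) / sqrt X"
    by (simp add: real_sqrt_mult real_sqrt_divide)
  moreover have "real l ^ 2 = real l * (sqrt (real l) * sqrt (real l))"
    by (simp add: power2_eq_square)
  moreover have "real r = sqrt (real r) * sqrt (real r)"
    by simp
  ultimately have "r2_majorant X (l, r) = sqrt (real l) * sqrt (real r) / sqrt X /
      (sqrt (real r) * sqrt (real r) * (real l * (sqrt (real l) * sqrt (real l))))"
    using assms(2) by (simp add: r2_majorant_def abs_moebius)
  also have "\<dots> = 1 / sqrt X * (1 / (real l * sqrt (real l)) * (1 / sqrt (real r)))"
    using pos assms(1) by (simp add: field_simps)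
  finally show ?thesis .
qed

lemma sum_r2_majorant_le_product:
  fixes q :: nat and X :: real
  assumes "q > 0" "X > 0" "finite G" "G \<subseteq> r2_outer_index q"
  defines "L \<equiv> {l \<in> fst ` G. squarefree l}"
  shows "sum (r2_majorant X) G \<le> 1 / sqrt X *
    ((\<Sum>l\<in>L. 1 / (real l * sqrt (real l))) * (\<Prod>p\<in>prime_factors q. 1 + 1 / sqrt (real p)))"
proof -
  define f where "f = (\<lambda>m::nat. 1 / (real m * sqrt (real m)))"
  define D where "D = squarefree_over (prime_factors q)"
  have finite: "finite L" "finite D"
    using assms(3) by (auto simp: L_def D_def intro: finite_squarefree_over)
  have L: "\<forall>l\<in>L. squarefree l \<and> coprime l q"
    using assms(4) by (auto simp: L_def r2_outer_index_def)
  have support: "r2_majorant X (l, r) = 0" if "(l, r) \<in> G - L \<times> D" for l r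
  proof (cases "squarefree (r * l)")
    case True
    then have "squarefree l" "squarefree r"
      using squarefree_multD by blast+
    moreover have "r dvd q"
      using that assms(4) by (auto simp: r2_outer_index_def)
    ultimately have "l \<in> L" "r \<in> D"
      using that assms(1) dvd_prime_factors[of q r]
      by (force simp: L_def D_def squarefree_over_def)+
    with that show ?thesis by simp
  qed (simp add: r2_majorant_def abs_moebius)
  have "sum (r2_majorant X) G \<le> sum (r2_majorant X) (L \<times> D)"
  proof -
    have "sum (r2_majorant X) G = sum (r2_majorant X) (G \<inter> L \<times> D)"
      using assms(3) support by (intro sum.mono_neutral_right) auto
    also have "\<dots> \<le> sum (r2_majorant X) (L \<times> D)"
      using finite assms(2) r2_majorant_nonneg by (intro sum_mono2) auto
    finally show ?thesis .
  qed
  also have "\<dots> = (\<Sum>(l, r)\<in>L \<times> D. 1 / sqrt X * (f l * (1 / sqrt (real r))))"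
  proof (rule sum.cong)
    fix x assume "x \<in> L \<times> D"
    then obtain l r where x: "x = (l, r)" "l \<in> L" "r \<in> D" by blast
    then have "squarefree (r * l)"
      using L coprime_squarefree_divisor[of r q l]
      by (auto simp: D_def squarefree_over_def squarefree_mult_coprime)
    then show "r2_majorant X x = (case x of (l, r) \<Rightarrow> 1 / sqrt X * (f l * (1 / sqrt (real r))))"
      using r2_majorant_squarefree[OF assms(2)] x(1) by (simp only: f_def prod.case)
  qed simp
  also have "\<dots> = 1 / sqrt X * (\<Sum>(l, r)\<in>L \<times> D. f l * (1 / sqrt (real r)))"
    by (simp only: sum_distrib_left case_prod_unfold)
  also have "\<dots> = 1 / sqrt X * (\<Sum>l\<in>L. \<Sum>r\<in>D. f l * (1 / sqrt (real r)))"
    by (simp only: sum.cartesian_product)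
  also have "\<dots> = 1 / sqrt X * (sum f L * (\<Prod>p\<in>prime_factors q. 1 + 1 / sqrt (real p)))"
    by (simp only: D_def sum_squarefree_divisors_inverse_sqrt[symmetric] sum_product)
  finally show ?thesis by (simp only: f_def)
qed

lemma sum_r2_majorant_le:
  fixes q :: nat and X :: real
  assumes "q > 0" "X > 0" "finite G" "G \<subseteq> r2_outer_index q"
  shows "sum (r2_majorant X) G \<le> 2.18 / sqrt X * j1_star q"
proof -
  define L where "L = {l \<in> fst ` G. squarefree l}"
  define s where "s = (\<Sum>l\<in>L. 1 / (real l * sqrt (real l)))"
  define A where "A = (\<Prod>p\<in>prime_factors q. 1 + 1 / sqrt (real p))"
  define C where "C = (\<Prod>p\<in>prime_factors q. 1 + 1 / (real p * sqrt (real p)))"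
  have "C > 0" unfolding C_def by (rule prod_pos) (auto intro: add_pos_nonneg)
  moreover have "s * C \<le> 2.18"
    unfolding s_def C_def using assms(3,4)
    by (intro sum_coprime_squarefree_inverse_three_halves_le) (auto simp: L_def r2_outer_index_def)
  ultimately have "s \<le> 2.18 / C" by (simp add: field_simps)
  moreover have "A \<ge> 0" unfolding A_def by (rule prod_nonneg) (auto intro: add_nonneg_nonneg)
  ultimately have "1 / sqrt X * (s * A) \<le> 1 / sqrt X * (2.18 / C * A)"
    using assms(2) by (intro mult_left_mono mult_right_mono) auto
  moreover have "sum (r2_majorant X) G \<le> 1 / sqrt X * (s * A)"
    unfolding s_def A_def L_def by (rule sum_r2_majorant_le_product[OF assms])
  ultimately show ?thesis
    by (simp add: j1_star_eq A_def C_def)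
qed

lemma r2_majorant_summable:
  assumes "q > 0" "X > 0"
  shows "r2_majorant X summable_on r2_outer_index q"
    "infsum (r2_majorant X) (r2_outer_index q) \<le> 2.18 / sqrt X * j1_star q"
  using nonneg_bounded_partial_sums_imp_infsum_le[of "r2_outer_index q" "r2_majorant X"]
    r2_majorant_nonneg[OF assms(2)] sum_r2_majorant_le[OF assms] by auto

definition r2_coeff :: "nat \<times> nat \<Rightarrow> real" where
  "r2_coeff = (\<lambda>(l, r). moebius (r * l) / (real r * real l ^ 2))"

definition r2_inner_index :: "real \<Rightarrow> nat \<Rightarrow> nat \<times> nat \<Rightarrow> nat set" where
  "r2_inner_index X q = (\<lambda>(l, r). large_coprimes X (l * r) (l * q))"

lemma r2_inner_bounds:
  assumes "X > 0" "p \<in> r2_outer_index q"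
  shows "(\<lambda>k. norm (r2_coeff p * moebius_totient_cube k)) summable_on r2_inner_index X q p"
    "(\<Sum>\<^sub>\<infinity>k\<in>r2_inner_index X q p. norm (r2_coeff p * moebius_totient_cube k))
       \<le> 3 / 2 * r2_majorant X p"
    "\<bar>r2_coeff p * (\<Sum>\<^sub>\<infinity>k\<in>r2_inner_index X q p. moebius_totient_cube k)\<bar> \<le> r2_majorant X p"
proof -
  obtain l r where p: "p = (l, r)" by fastforce
  then have "l * r > 0"
    using assms(2) by (auto simp: r2_outer_index_def)
  note large = moebius_totient_cube_large_coprimes[OF assms(1) this, of "l * q"]
  have K: "r2_inner_index X q p = large_coprimes X (l * r) (l * q)"
    by (simp add: p r2_inner_index_def)
  have majorant: "r2_majorant X p = \<bar>r2_coeff p\<bar> * sqrt (real (l * r) / X)"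
    by (simp add: p r2_majorant_def r2_coeff_def abs_mult)
  show "(\<lambda>k. norm (r2_coeff p * moebius_totient_cube k)) summable_on r2_inner_index X q p"
    unfolding K using summable_on_cmult_right[OF large(1), of "\<bar>r2_coeff p\<bar>"]
    by (simp add: abs_mult)
  have "(\<Sum>\<^sub>\<infinity>k\<in>r2_inner_index X q p. norm (r2_coeff p * moebius_totient_cube k))
      = \<bar>r2_coeff p\<bar> * (\<Sum>\<^sub>\<infinity>k\<in>large_coprimes X (l * r) (l * q). norm (moebius_totient_cube k))"
    by (simp add: K abs_mult infsum_cmult_right')
  also have "\<dots> \<le> \<bar>r2_coeff p\<bar> * (3 / 2 * sqrt (real (l * r) / X))"
    using large(2) by (intro mult_left_mono) auto
  also have "\<dots> = 3 / 2 * r2_majorant X p"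
    by (simp add: majorant)
  finally show "(\<Sum>\<^sub>\<infinity>k\<in>r2_inner_index X q p. norm (r2_coeff p * moebius_totient_cube k))
      \<le> 3 / 2 * r2_majorant X p" .
  show "\<bar>r2_coeff p * (\<Sum>\<^sub>\<infinity>k\<in>r2_inner_index X q p. moebius_totient_cube k)\<bar> \<le> r2_majorant X p"
    unfolding majorant abs_mult K using large(3) by (intro mult_left_mono) auto
qed

lemma r2_star_eq_infsum_Sigma:
  "r2_star X q = (\<Sum>\<^sub>\<infinity>(p, k)\<in>Sigma (r2_outer_index q) (r2_inner_index X q).
     r2_coeff p * moebius_totient_cube k)"
proof -
  define g where "g = (\<lambda>(k, l, r). moebius (r * k * l) * real (totient k) /
    (real r * real k ^ 3 * real l ^ 2))"
  define \<psi> :: "(nat \<times> nat) \<times> nat \<Rightarrow> nat \<times> nat \<times> nat"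
    where "\<psi> = (\<lambda>((l, r), k). (k, l, r))"
  define S where "S = Sigma (r2_outer_index q) (r2_inner_index X q)"
  have bij: "bij_betw \<psi> S (r2_index X q)"
    by (rule bij_betw_byWitness[where f' = "\<lambda>(k, l, r). ((l, r), k)"])
       (auto simp: \<psi>_def S_def r2_inner_index_def r2_outer_index_def large_coprimes_def
          r2_index_def mult_ac)
  have "g (\<psi> x) = (case x of (p, k) \<Rightarrow> r2_coeff p * moebius_totient_cube k)" if "x \<in> S" for x
  proof -
    obtain l r k where x: "x = ((l, r), k)" by (metis prod.collapse)
    with that have "coprime k l" "coprime k q" "r dvd q"
      by (auto simp: S_def r2_inner_index_def r2_outer_index_def large_coprimes_def)
    then have "coprime k (r * l)"
      using coprime_divisors[OF dvd_refl \<open>r dvd q\<close>] by auto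
    then have "moebius (r * k * l) = moebius k * moebius (r * l)"
      by (metis moebius_mult_coprime mult.commute mult.left_commute)
    then show ?thesis
      by (simp add: x r2_coeff_def g_def \<psi>_def moebius_totient_cube_def mult_ac)
  qed
  then have "(\<Sum>\<^sub>\<infinity>x\<in>S. g (\<psi> x))
      = (\<Sum>\<^sub>\<infinity>(p, k)\<in>S. r2_coeff p * moebius_totient_cube k)"
    by (rule infsum_cong)
  moreover have "r2_star X q = (\<Sum>\<^sub>\<infinity>x\<in>S. g (\<psi> x))"
    unfolding r2_star_def g_def[symmetric] by (rule infsum_reindex_bij_betw[OF bij, symmetric])
  ultimately show ?thesis by (simp add: S_def)
qed

lemma r2_terms_summable:
  assumes "q > 0" "X > 0"
  shows "(\<lambda>(p, k). r2_coeff p * moebius_totient_cube k) summable_on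
    Sigma (r2_outer_index q) (r2_inner_index X q)"
proof -
  define F where "F = (\<lambda>(p, k). r2_coeff p * moebius_totient_cube k)"
  have "(\<lambda>p. norm (\<Sum>\<^sub>\<infinity>k\<in>r2_inner_index X q p. norm (F (p, k)))) summable_on r2_outer_index q"
  proof (rule summable_on_comparison_test)
    show "(\<lambda>p. 3 / 2 * r2_majorant X p) summable_on r2_outer_index q"
      using r2_majorant_summable(1)[OF assms] by (rule summable_on_cmult_right)
    fix p assume "p \<in> r2_outer_index q"
    moreover have "0 \<le> (\<Sum>\<^sub>\<infinity>k\<in>r2_inner_index X q p. norm (F (p, k)))"
      by (rule infsum_nonneg) simp
    ultimately show "norm (\<Sum>\<^sub>\<infinity>k\<in>r2_inner_index X q p. norm (F (p, k))) \<le> 3 / 2 * r2_majorant X p"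
      using r2_inner_bounds(2)[OF assms(2)] by (simp add: F_def)
  qed simp
  moreover have "(\<lambda>k. norm (F (p, k))) summable_on r2_inner_index X q p"
    if "p \<in> r2_outer_index q" for p
    using r2_inner_bounds(1)[OF assms(2) that] by (simp add: F_def)
  ultimately have "(\<lambda>x. norm (F x)) summable_on Sigma (r2_outer_index q) (r2_inner_index X q)"
    by (intro Infinite_Sum.abs_summable_on_Sigma_iff[THEN iffD2]) blast
  then show ?thesis
    unfolding F_def by (rule abs_summable_summable)
qed

lemma r2_star_iterated:
  assumes "q > 0" "X > 0"
  shows "r2_star X q = (\<Sum>\<^sub>\<infinity>p\<in>r2_outer_index q.
    r2_coeff p * (\<Sum>\<^sub>\<infinity>k\<in>r2_inner_index X q p. moebius_totient_cube k))"
proof -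
  have "r2_star X q = (\<Sum>\<^sub>\<infinity>p\<in>r2_outer_index q.
      \<Sum>\<^sub>\<infinity>k\<in>r2_inner_index X q p. r2_coeff p * moebius_totient_cube k)"
    unfolding r2_star_eq_infsum_Sigma
    using infsum_Sigma_banach[OF r2_terms_summable[OF assms]] by simp
  then show ?thesis
    by (simp add: infsum_cmult_right')
qed

theorem mainTheorem14:
  fixes q :: nat and X :: real
  assumes "q > 0" and "X > 0"
  shows "\<bar>r2_star X q\<bar> \<le> 2.18 / sqrt X * j1_star q"
proof -
  define G where "G = (\<lambda>p. r2_coeff p * (\<Sum>\<^sub>\<infinity>k\<in>r2_inner_index X q p. moebius_totient_cube k))"
  have G_le: "norm (G p) \<le> r2_majorant X p" if "p \<in> r2_outer_index q" for p
    using r2_inner_bounds(3)[OF assms(2) that] by (simp add: G_def)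
  note majorant = r2_majorant_summable[OF assms]
  have G_summable: "(\<lambda>p. norm (G p)) summable_on r2_outer_index q"
    using majorant(1) G_le by (rule summable_on_comparison_test) auto
  have "\<bar>r2_star X q\<bar> = norm (infsum G (r2_outer_index q))"
    using r2_star_iterated[OF assms] by (simp add: G_def)
  also have "\<dots> \<le> infsum (\<lambda>p. norm (G p)) (r2_outer_index q)"
    by (rule norm_infsum_bound[OF G_summable])
  also have "\<dots> \<le> infsum (r2_majorant X) (r2_outer_index q)"
    using G_summable majorant(1) G_le by (rule infsum_mono)
  also have "\<dots> \<le> 2.18 / sqrt X * j1_star q"
    by (rule majorant(2))
  finally show ?thesis .
qed

end
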